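(* Let $n\ge2$ and let $A=T_n\langle S;T\rangle$ be a Boolean Toeplitz matrix with $S=\{s_1<\dots<s_{k_1}\}$, $T=\{t_1<\dots<t_{k_2}\}$ nonempty subsets of $\{1,\dots,n-1\}$, $\max S+\min T\le n$ and $\min S+\max T\le n$. Let $d=\gcd\{s+t: s\in S, t\in T\}$ and $d'=\gcd(d,s_1)$. Then (a) the matrix period of $A$ is $d/d'$; (b) the competition period of $A$ is $1$; (c) there is a permutation matrix $P$ such that, as $m\to\infty$, $P\,(A^m(A^T)^m)\,P^T$ converges to (i.e. is eventually equal to) the block diagonal matrix $\mathrm{diag}(J_{m_1},\dots,J_{m_d})$, where $J_{m_i}$ is the all-ones matrix of order $m_i=|\{v\in[n] : v\equiv i\pmod d\}|$.
   Context: Boolean arithmetic on $\{0,1\}$: $1+1=1$. $T_n\langle S;T\rangle$ is the $n\times n$ $(0,1)$-matrix whose $(i,j)$-entry is $1$ iff $j-i\in S$ or $i-j\in T$. The matrix period of $A$ is the smallest $p\ge1$ with $A^m=A^{m+p}$ for all sufficiently large $m$. The competition index $q$ of $A$ is the smallest positive integer such that $A^{q+i}(A^T)^{q+i}=A^{q+r+i}(A^T)^{q+r+i}$ for some $r\ge1$ and all $i\ge0$; the competition period is the smallest $p\ge1$ with $A^q(A^T)^q=A^{q+p}(A^T)^{q+p}$. *)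

theory Defs
  imports Main
begin

text \<open>Boolean n-by-n matrices with row/column indices in [n] = {1..n}, represented as
  functions nat => nat => bool; entries outside [n] x [n] are False.\<close>

type_synonym bmat = "nat \<Rightarrow> nat \<Rightarrow> bool"

definition toeplitz :: "nat \<Rightarrow> nat set \<Rightarrow> nat set \<Rightarrow> bmat" where
  "toeplitz n S T = (\<lambda>i j. i \<in> {1..n} \<and> j \<in> {1..n} \<and>
     ((int j - int i) \<in> int ` S \<or> (int i - int j) \<in> int ` T))"

definition bmult :: "nat \<Rightarrow> bmat \<Rightarrow> bmat \<Rightarrow> bmat" where
  "bmult n A B = (\<lambda>i j. i \<in> {1..n} \<and> j \<in> {1..n} \<and> (\<exists>k\<in>{1..n}. A i k \<and> B k j))"

definition bid :: "nat \<Rightarrow> bmat" where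
  "bid n = (\<lambda>i j. i \<in> {1..n} \<and> i = j)"

fun bpow :: "nat \<Rightarrow> bmat \<Rightarrow> nat \<Rightarrow> bmat" where
  "bpow n A 0 = bid n"
| "bpow n A (Suc m) = bmult n (bpow n A m) A"

definition btrans :: "bmat \<Rightarrow> bmat" where
  "btrans A = (\<lambda>i j. A j i)"

definition is_matrix_period :: "nat \<Rightarrow> bmat \<Rightarrow> nat \<Rightarrow> bool" where
  "is_matrix_period n A p \<longleftrightarrow>
     p \<ge> 1 \<and> (\<exists>M. \<forall>m\<ge>M. bpow n A m = bpow n A (m + p)) \<and>
     (\<forall>p'. 1 \<le> p' \<and> p' < p \<longrightarrow> \<not> (\<exists>M. \<forall>m\<ge>M. bpow n A m = bpow n A (m + p')))"

definition compm :: "nat \<Rightarrow> bmat \<Rightarrow> nat \<Rightarrow> bmat" where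
  "compm n A m = bmult n (bpow n A m) (bpow n (btrans A) m)"

definition is_competition_index :: "nat \<Rightarrow> bmat \<Rightarrow> nat \<Rightarrow> bool" where
  "is_competition_index n A q \<longleftrightarrow>
     q \<ge> 1 \<and> (\<exists>r\<ge>1. \<forall>i. compm n A (q + i) = compm n A (q + r + i)) \<and>
     (\<forall>q'. 1 \<le> q' \<and> q' < q \<longrightarrow>
        \<not> (\<exists>r\<ge>1. \<forall>i. compm n A (q' + i) = compm n A (q' + r + i)))"

definition is_competition_period :: "nat \<Rightarrow> bmat \<Rightarrow> nat \<Rightarrow> bool" where
  "is_competition_period n A p \<longleftrightarrow>
     (\<exists>q. is_competition_index n A q \<and> p \<ge> 1 \<and> compm n A q = compm n A (q + p) \<and>
        (\<forall>p'. 1 \<le> p' \<and> p' < p \<longrightarrow> compm n A q \<noteq> compm n A (q + p')))"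

text \<open>Block diagonal matrix diag(J_{ms 1}, ..., J_{ms d}) of order n: position i lies in
  block b, the least b with i <= ms 1 + ... + ms b.\<close>
definition block_of :: "(nat \<Rightarrow> nat) \<Rightarrow> nat \<Rightarrow> nat" where
  "block_of ms i = (LEAST b. i \<le> (\<Sum>c=1..b. ms c))"

definition blockdiag_ones :: "nat \<Rightarrow> (nat \<Rightarrow> nat) \<Rightarrow> bmat" where
  "blockdiag_ones n ms = (\<lambda>i j. i \<in> {1..n} \<and> j \<in> {1..n} \<and> block_of ms i = block_of ms j)"

end

theory Submission
  imports Defs "HOL-Computational_Algebra.Primes"
begin

text \<open>
  Walks in the digraph of \<open>A = T\<^sub>n\<langle>S;T\<rangle>\<close> move by \<open>+s\<close> (\<open>s \<in> S\<close>) or by \<open>-t\<close> (\<open>t \<in> T\<close>).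
  Since \<open>s \<equiv> s\<^sub>1\<close> and \<open>-t \<equiv> s\<^sub>1\<close> modulo \<open>d\<close>, a walk of length \<open>m\<close> from \<open>i\<close> to \<open>k\<close>
  forces \<open>k \<equiv> i + m s\<^sub>1 (mod d)\<close>. For large \<open>m\<close> this is also sufficient. The
  hypotheses \<open>max S + min T \<le> n\<close> and \<open>min S + max T \<le> n\<close> let a greedy walk combine
  steps \<open>+x\<close> and \<open>-y\<close> without leaving \<open>[1,n]\<close>: this yields closed walks of length
  \<open>(x + y)/gcd x y\<close> at every vertex and, by Bezout, moves by \<open>\<plusminus>gcd x y\<close>, hence walks
  between any two vertices congruent modulo \<open>d' = gcd d s\<^sub>1\<close>. A \<open>p\<close>-adic valuation
  argument shows that the lengths of these closed walks have a gcd dividing \<open>d/d'\<close>, so all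
  large multiples of \<open>d/d'\<close> are closed-walk lengths. Hence eventually \<open>A\<^sup>m(i,k) = 1\<close> iff
  \<open>k \<equiv> i + m s\<^sub>1 (mod d)\<close>: the period is \<open>d/d'\<close>, and \<open>A\<^sup>m(A\<^sup>T)\<^sup>m(i,j) = 1\<close> iff
  \<open>i \<equiv> j (mod d)\<close>, which is eventually constant and becomes block diagonal once \<open>[1,n]\<close>
  is sorted by residue class.
\<close>

section \<open>Boolean matrix powers\<close>

lemma bpow_in_range: "bpow n A m i k \<Longrightarrow> i \<in> {1..n} \<and> k \<in> {1..n}"
  by (cases m) (auto simp: bid_def bmult_def)

lemma bpow_one: "bpow n A 1 i k \<longleftrightarrow> i \<in> {1..n} \<and> k \<in> {1..n} \<and> A i k"
  by (auto simp: bmult_def bid_def)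

lemma bpow_add: "bpow n A a i j \<Longrightarrow> bpow n A b j k \<Longrightarrow> bpow n A (a + b) i k"
proof (induction b arbitrary: k)
  case 0
  then show ?case by (simp add: bid_def)
next
  case (Suc b)
  then obtain l where "bpow n A b j l" "l \<in> {1..n}" "A l k" "k \<in> {1..n}"
    by (auto simp: bmult_def)
  with Suc.IH[OF Suc.prems(1)] bpow_in_range[OF Suc.prems(1)] show ?case
    unfolding add_Suc_right bpow.simps bmult_def by blast
qed

lemma bmult_assoc: "bmult n (bmult n X Y) Z = bmult n X (bmult n Y Z)"
  by (auto simp: bmult_def fun_eq_iff)

lemma bpow_Suc_left: "bpow n A (Suc m) = bmult n A (bpow n A m)"
proof (induction m)
  case 0
  then show ?case by (auto simp: bmult_def bid_def fun_eq_iff)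
next
  case (Suc m)
  then show ?case by (simp add: bmult_assoc)
qed

lemma btrans_bmult: "btrans (bmult n X Y) = bmult n (btrans Y) (btrans X)"
  by (auto simp: btrans_def bmult_def fun_eq_iff)

lemma bpow_btrans: "bpow n (btrans A) m = btrans (bpow n A m)"
proof (induction m)
  case 0
  then show ?case by (auto simp: bid_def btrans_def fun_eq_iff)
next
  case (Suc m)
  have "bpow n (btrans A) (Suc m) = bmult n (btrans (bpow n A m)) (btrans A)"
    by (simp add: Suc.IH)
  also have "\<dots> = btrans (bpow n A (Suc m))"
    by (simp only: bpow_Suc_left btrans_bmult)
  finally show ?case .
qed

lemma bounded_walk_lengths:
  "\<exists>B. \<forall>i k. (\<exists>m. bpow n A m i k) \<longrightarrow> (\<exists>m\<le>B. bpow n A m i k)"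
proof -
  define len where "len = (\<lambda>(i, k). LEAST m. bpow n A m i k)"
  define B where "B = Max (len ` ({1..n} \<times> {1..n}))"
  have "\<exists>m\<le>B. bpow n A m i k" if "bpow n A m i k" for m i k
  proof (intro exI conjI)
    show "bpow n A (len (i, k)) i k" using that by (simp add: len_def) (rule LeastI)
    show "len (i, k) \<le> B" using bpow_in_range[OF that] by (simp add: B_def)
  qed
  then show ?thesis by blast
qed

lemma is_matrix_periodI:
  assumes "p \<ge> 1" and shift: "\<And>m q. m \<ge> M \<Longrightarrow> bpow n A (m + q) = bpow n A m \<longleftrightarrow> p dvd q"
  shows "is_matrix_period n A p"
  unfolding is_matrix_period_def
proof (intro conjI allI impI notI)
  show "p \<ge> 1" by fact
  show "\<exists>M. \<forall>m\<ge>M. bpow n A m = bpow n A (m + p)" using shift[of _ p] by (metis dvd_refl)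
next
  fix p' assume p': "1 \<le> p' \<and> p' < p" and "\<exists>M'. \<forall>m\<ge>M'. bpow n A m = bpow n A (m + p')"
  then obtain M' where "bpow n A (max M M') = bpow n A (max M M' + p')" by (meson max.cobounded2)
  then have "p dvd p'" using shift[of "max M M'" p'] by simp
  with p' show False by (simp add: nat_dvd_not_less)
qed

lemma compm_iff:
  "compm n A m i j \<longleftrightarrow>
     i \<in> {1..n} \<and> j \<in> {1..n} \<and> (\<exists>k\<in>{1..n}. bpow n A m i k \<and> bpow n A m j k)"
  unfolding compm_def bmult_def bpow_btrans by (simp add: btrans_def)

lemma is_competition_period_oneI:
  assumes const: "\<And>m. m \<ge> M \<Longrightarrow> compm n A m = C"
  shows "is_competition_period n A 1"
proof -
  define P where "P q \<longleftrightarrow> q \<ge> 1 \<and> (\<exists>r\<ge>1. \<forall>i. compm n A (q + i) = compm n A (q + r + i))" for q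
  have "P (M + 1)" using const by (auto simp: P_def)
  define q where "q = (LEAST q. P q)"
  have "P q" unfolding q_def by (rule LeastI) fact
  then obtain r where r: "r \<ge> 1" "\<And>i. compm n A (q + i) = compm n A (q + r + i)"
    by (auto simp: P_def)
  have index: "is_competition_index n A q"
    using \<open>P q\<close> not_less_Least[of _ P] unfolding is_competition_index_def P_def q_def by blast
  \<comment> \<open>Shifting by multiples of \<open>r\<close> moves \<open>q\<close> and \<open>q + 1\<close> into the constant range.\<close>
  have shift: "compm n A (q + i) = compm n A (q + c * r + i)" for c i
  proof (induction c)
    case (Suc c)
    then show ?case using r(2)[of "c * r + i"] by (simp add: algebra_simps)
  qed simp
  have "M \<le> M * r" using r(1) by simp
  then have "M \<le> q + M * r + i" for i by linarith
  then have "compm n A (q + i) = C" for i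
    using shift[of i M] const by presburger
  from this[of 0] this[of 1] show ?thesis
    using index by (auto simp: is_competition_period_def)
qed

section \<open>Greedy walks\<close>

lemma greedy_walk:
  fixes W :: "nat \<Rightarrow> nat \<Rightarrow> nat \<Rightarrow> bool"
  assumes refl: "\<And>p. p \<in> {1..n} \<Longrightarrow> W 0 p p"
    and trans: "\<And>a b p q r. W a p q \<Longrightarrow> W b q r \<Longrightarrow> W (a + b) p r"
    and up: "\<And>p. 1 \<le> p \<Longrightarrow> p + x \<le> n \<Longrightarrow> W lu p (p + x)"
    and down: "\<And>p. y < p \<Longrightarrow> p \<le> n \<Longrightarrow> W ld p (p - y)"
    and xy: "x + y \<le> n"
  shows "p \<in> {1..n} \<Longrightarrow> int p + int u * int x - int w * int y \<in> {1..int n} \<Longrightarrow>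
    W (u * lu + w * ld) p (nat (int p + int u * int x - int w * int y))"
proof (induction "u + w" arbitrary: u w p)
  case 0
  then show ?case using refl by simp
next
  case (Suc N)
  have ux: "u > 0 \<Longrightarrow> int x \<le> int u * int x" and wy: "w > 0 \<Longrightarrow> int y \<le> int w * int y"
    by (simp_all add: mult_le_cancel_right1)
  \<comment> \<open>A step is always possible: if going down is blocked (\<open>p \<le> y\<close>), going up is not.\<close>
  have "(w > 0 \<and> y < p) \<or> (u > 0 \<and> p + x \<le> n)"
    using Suc.prems Suc.hyps(2) xy ux wy by (cases "w > 0"; cases "u > 0") auto
  then show ?case
  proof
    assume step: "w > 0 \<and> y < p"
    then obtain w' where w: "w = Suc w'" by (cases w) auto
    have "p - y \<in> {1..n}" using step Suc.prems by auto
    then have "W (u * lu + w' * ld) (p - y) (nat (int (p - y) + int u * int x - int w' * int y))"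
      using Suc.hyps(1)[of u w' "p - y"] Suc.prems Suc.hyps(2) step w
      by (auto simp: algebra_simps)
    from trans[OF down this] show ?thesis
      using step w Suc.prems by (auto simp: algebra_simps)
  next
    assume step: "u > 0 \<and> p + x \<le> n"
    then obtain u' where u: "u = Suc u'" by (cases u) auto
    have "W (u' * lu + w * ld) (p + x) (nat (int (p + x) + int u' * int x - int w * int y))"
      using Suc.hyps(1)[of u' w "p + x"] Suc.prems Suc.hyps(2) step u by (auto simp: algebra_simps)
    from trans[OF up this] show ?thesis
      using step u Suc.prems by (auto simp: algebra_simps)
  qed
qed

section \<open>Numerical semigroups\<close>

definition add_submonoid :: "nat set \<Rightarrow> bool" where
  "add_submonoid X \<longleftrightarrow> 0 \<in> X \<and> (\<forall>a\<in>X. \<forall>b\<in>X. a + b \<in> X)"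

lemma add_submonoid_add: "add_submonoid X \<Longrightarrow> a \<in> X \<Longrightarrow> b \<in> X \<Longrightarrow> a + b \<in> X"
  by (simp add: add_submonoid_def)

lemma add_submonoid_mult: "add_submonoid X \<Longrightarrow> a \<in> X \<Longrightarrow> k * a \<in> X"
  by (induction k) (simp_all add: add_submonoid_def)

lemma add_submonoid_large_multiples_gcd:
  fixes x g :: nat
  assumes X: "add_submonoid X" "x \<in> X" and "g \<noteq> 0"
    and bezout: "x * u = g * v + gcd x g"
    and large: "\<And>m. K \<le> m \<Longrightarrow> g dvd m \<Longrightarrow> m \<in> X"
    and m: "K + g * u * x \<le> m" "gcd x g dvd m"
  shows "m \<in> X"
proof -
  \<comment> \<open>Correct the residue of \<open>m\<close> modulo \<open>g\<close> by a multiple of \<open>x\<close>, using \<open>x u \<equiv> gcd x g\<close>.\<close>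
  have "gcd x g dvd m mod g" using m(2) by (simp add: dvd_mod)
  then obtain r where r: "m mod g = r * gcd x g" by (metis dvdE mult.commute)
  have "gcd x g > 0" using \<open>g \<noteq> 0\<close> by simp
  moreover have "r * gcd x g < g" using \<open>g \<noteq> 0\<close> by (simp flip: r)
  ultimately have "r < g" by (metis le_less_trans mult_le_mono2 mult_1_right Suc_leI One_nat_def)
  then have le: "r * u * x \<le> g * u * x" by simp
  have "r * u * x = g * (v * r) + m mod g"
    using arg_cong[OF bezout, of "(*) r"] r by (simp add: algebra_simps)
  then have "m - r * u * x + g * (v * r) = g * (m div g)"
    using le m(1) by (simp add: minus_mod_eq_mult_div)
  then have "g dvd m - r * u * x + g * (v * r)" by simp
  then have "g dvd m - r * u * x" by (simp add: dvd_add_left_iff)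
  moreover have "K \<le> m - r * u * x" using le m(1) by linarith
  ultimately have "m - r * u * x \<in> X" by (rule large[rotated])
  moreover have "(r * u) * x \<in> X" using add_submonoid_mult[OF X] by simp
  ultimately have "(m - r * u * x) + r * u * x \<in> X" by (rule add_submonoid_add[OF X(1)])
  then show ?thesis using le m(1) by simp
qed

lemma large_Gcd_multiples_in_add_submonoid:
  assumes "finite F"
  shows "\<exists>K. \<forall>X. add_submonoid X \<longrightarrow> F \<subseteq> X \<longrightarrow> (\<forall>m\<ge>K. Gcd F dvd m \<longrightarrow> m \<in> X)"
  using assms
proof (induction F rule: finite_induct)
  case empty
  show ?case by (auto simp: add_submonoid_def)
next
  case (insert x F)
  then obtain K where K: "\<And>X m. add_submonoid X \<Longrightarrow> F \<subseteq> X \<Longrightarrow> K \<le> m \<Longrightarrow> Gcd F dvd m \<Longrightarrow> m \<in> X"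
    by blast
  consider "x = 0" | "Gcd F = 0" | "x \<noteq> 0" "Gcd F \<noteq> 0" by blast
  then show ?case
  proof cases
    case 1
    then show ?thesis using K by auto
  next
    case 2
    have "m \<in> X" if "add_submonoid X" "insert x F \<subseteq> X" "Gcd (insert x F) dvd m" for X m
    proof -
      have "x dvd m" using that(3) unfolding Gcd_insert 2 by simp
      then obtain c where "m = c * x" by (metis dvdE mult.commute)
      with add_submonoid_mult[OF that(1)] that(2) show ?thesis by auto
    qed
    then show ?thesis by blast
  next
    case 3
    obtain u v where bezout: "x * u = Gcd F * v + gcd x (Gcd F)" using bezout_nat[OF 3(1)] by blast
    show ?thesis
    proof (intro exI[of _ "K + Gcd F * u * x"] allI impI)
      fix X m assume X: "add_submonoid X" "insert x F \<subseteq> X"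
        and m: "K + Gcd F * u * x \<le> m" "Gcd (insert x F) dvd m"
      show "m \<in> X"
        using add_submonoid_large_multiples_gcd[OF X(1) _ 3(2) bezout K[OF X(1)] m(1)] X m(2) by simp
    qed
  qed
qed

section \<open>Divisibility and valuations\<close>

lemma mod_eq_iff_int_dvd: "(a::nat) mod d = b mod d \<longleftrightarrow> int d dvd int a - int b"
  by (metis mod_eq_dvd_iff of_nat_eq_iff of_nat_mod)

lemma dvd_mult_iff_div_gcd_dvd:
  fixes a b c :: nat
  assumes "a > 0"
  shows "a dvd b * c \<longleftrightarrow> a div gcd a c dvd b"
proof -
  define G where "G = gcd a c"
  have "G > 0" using assms by (simp add: G_def)
  have a: "a = G * (a div G)" and c: "c = G * (c div G)" by (simp_all add: G_def)
  have "coprime (a div G) (c div G)" using div_gcd_coprime[of a c] assms by (simp add: G_def)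
  have "a dvd b * c \<longleftrightarrow> G * (a div G) dvd G * (b * (c div G))"
    using a c by (metis mult.left_commute)
  also have "\<dots> \<longleftrightarrow> a div G dvd b * (c div G)" using \<open>G > 0\<close> by simp
  also have "\<dots> \<longleftrightarrow> a div G dvd b"
    using \<open>coprime (a div G) (c div G)\<close> by (simp add: coprime_dvd_mult_left_iff)
  finally show ?thesis by (simp add: G_def)
qed

definition cycle_length :: "nat \<Rightarrow> nat \<Rightarrow> nat" where
  "cycle_length x y = x div gcd x y + y div gcd x y"

lemma cycle_length_commute: "cycle_length x y = cycle_length y x"
  by (simp add: cycle_length_def gcd.commute add.commute)

lemma gcd_mult_cycle_length: "gcd x y * cycle_length x y = x + y"
  by (simp add: cycle_length_def distrib_left)

lemma cycle_length_pos: "x > 0 \<Longrightarrow> cycle_length x y > 0"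
  by (simp add: cycle_length_def div_greater_zero_iff)

lemma multiplicity_cycle_length:
  fixes p a b :: nat
  assumes p: "prime p" and dvd: "p dvd cycle_length a b" and a: "a > 0"
  shows "multiplicity p a = multiplicity p (gcd a b)"
    and "multiplicity p (a + b) = multiplicity p (gcd a b) + multiplicity p (cycle_length a b)"
proof -
  define G where "G = gcd a b"
  have G: "G > 0" using a by (simp add: G_def)
  have coprime: "coprime (a div G) (b div G)" using div_gcd_coprime[of a b] a by (simp add: G_def)
  have "\<not> p dvd a div G"
  proof
    assume "p dvd a div G"
    moreover from this have "p dvd b div G"
      using dvd by (simp add: cycle_length_def G_def dvd_add_right_iff)
    ultimately show False using coprime p coprime_common_divisor not_prime_unit by blast
  qed
  then have "multiplicity p (a div G) = 0" by (simp add: not_dvd_imp_multiplicity_0)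
  moreover have "G * (a div G) = a" by (simp add: G_def)
  moreover from this have "a div G \<noteq> 0" using a by (metis mult_0_right less_irrefl)
  ultimately show "multiplicity p a = multiplicity p (gcd a b)"
    using prime_elem_multiplicity_mult_distrib[of p G "a div G"] p G by (simp add: G_def)
  show "multiplicity p (a + b) = multiplicity p (gcd a b) + multiplicity p (cycle_length a b)"
    using gcd_mult_cycle_length[of a b] prime_elem_multiplicity_mult_distrib[of p "gcd a b"]
      p a cycle_length_pos[OF a] by (metis gcd_eq_0_iff not_gr0 prime_imp_prime_elem)
qed

lemma prime_power_dvd_sums:
  fixes S T :: "nat set" and p k s1 t1 :: nat
  assumes p: "prime p" and "k > 0" and s1: "s1 \<in> S" and t1: "t1 \<in> T" and pos: "0 \<notin> S" "0 \<notin> T"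
    and dvd_T: "\<And>y. y \<in> T \<Longrightarrow> p ^ k dvd cycle_length s1 y"
    and dvd_S: "\<And>x. x \<in> S \<Longrightarrow> p ^ k dvd cycle_length x t1"
    and x: "x \<in> S" and y: "y \<in> T"
  shows "p ^ (multiplicity p s1 + k) dvd x + y"
proof -
  define j where "j = multiplicity p s1"
  have S_pos: "a \<in> S \<Longrightarrow> a > 0" and T_pos: "b \<in> T \<Longrightarrow> b > 0" for a b
    using pos by (auto intro: gr0I)
  have p_dvd: "p dvd c" if "p ^ k dvd c" for c
    using that \<open>k > 0\<close> by (metis dvd_power dvd_trans)
  have k_le: "k \<le> multiplicity p (cycle_length a b)" if "p ^ k dvd cycle_length a b" "a > 0" for a b
    using that cycle_length_pos[OF that(2)] p by (intro multiplicity_geI) (auto simp: not_prime_unit)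
  have T_val: "multiplicity p b = j \<and> j + k \<le> multiplicity p (s1 + b)" if b: "b \<in> T" for b
  proof -
    have "p dvd cycle_length s1 b" using p_dvd dvd_T[OF b] by blast
    then have "multiplicity p s1 = multiplicity p (gcd s1 b)"
      and "multiplicity p (s1 + b) = multiplicity p (gcd s1 b) + multiplicity p (cycle_length s1 b)"
      and "multiplicity p b = multiplicity p (gcd s1 b)"
      using multiplicity_cycle_length[OF p _ S_pos[OF s1]]
        multiplicity_cycle_length(1)[OF p _ T_pos[OF b], of s1]
      by (auto simp: cycle_length_commute gcd.commute)
    moreover have "k \<le> multiplicity p (cycle_length s1 b)" using k_le[OF dvd_T[OF b] S_pos[OF s1]] .
    ultimately show ?thesis by (simp add: j_def)
  qed
  then have t1_val: "multiplicity p t1 = j" using t1 by blast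
  have S_val: "j + k \<le> multiplicity p (a + t1)" if a: "a \<in> S" for a
  proof -
    have "p dvd cycle_length t1 a" using p_dvd dvd_S[OF a] by (metis cycle_length_commute)
    then have "multiplicity p t1 = multiplicity p (gcd t1 a)"
      and "multiplicity p (t1 + a) = multiplicity p (gcd t1 a) + multiplicity p (cycle_length t1 a)"
      using multiplicity_cycle_length[OF p _ T_pos[OF t1]] by auto
    moreover have "k \<le> multiplicity p (cycle_length t1 a)"
      using k_le[OF dvd_S[OF a] S_pos[OF a]] by (simp add: cycle_length_commute)
    ultimately show ?thesis using t1_val by (simp add: add.commute)
  qed
  have "p ^ (j + k) dvd x + t1" "p ^ (j + k) dvd s1 + y" "p ^ (j + k) dvd s1 + t1"
    using S_val[OF x] T_val[OF y] T_val[OF t1] by (auto intro: multiplicity_dvd')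
  then have "p ^ (j + k) dvd (x + y) + (s1 + t1)"
    by (metis dvd_add add.assoc add.left_commute)
  then show ?thesis using \<open>p ^ (j + k) dvd s1 + t1\<close> by (simp add: j_def dvd_add_left_iff)
qed

lemma dvd_Gcd_sums_div_gcd:
  fixes S T :: "nat set" and s1 t1 e :: nat
  assumes s1: "s1 \<in> S" and t1: "t1 \<in> T" and pos: "0 \<notin> S" "0 \<notin> T" and "e > 0"
    and dvd_T: "\<And>y. y \<in> T \<Longrightarrow> e dvd cycle_length s1 y"
    and dvd_S: "\<And>x. x \<in> S \<Longrightarrow> e dvd cycle_length x t1"
  defines "d \<equiv> Gcd {s + t | s t. s \<in> S \<and> t \<in> T}"
  shows "e dvd d div gcd d s1"
proof (rule multiplicity_le_imp_dvd)
  show "e \<noteq> 0" using \<open>e > 0\<close> by simp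
  fix p :: nat assume p: "prime p"
  define k where "k = multiplicity p e"
  have "k \<le> multiplicity p (d div gcd d s1)" if "k > 0"
  proof -
    have "p ^ k dvd e" by (simp add: k_def multiplicity_dvd)
    then have "p ^ k dvd cycle_length s1 y" if "y \<in> T" for y using dvd_T[OF that] by (rule dvd_trans)
    moreover have "p ^ k dvd cycle_length x t1" if "x \<in> S" for x using dvd_S[OF that]
      by (rule dvd_trans[OF \<open>p ^ k dvd e\<close>])
    ultimately have "p ^ (multiplicity p s1 + k) dvd d"
      unfolding d_def using prime_power_dvd_sums[OF p that s1 t1 pos] by (intro Gcd_greatest) blast
    moreover have "s1 > 0" using s1 pos by (auto intro: gr0I)
    moreover from this have "d \<noteq> 0"
      using Gcd_dvd[of "s1 + t1" "{s + t | s t. s \<in> S \<and> t \<in> T}"] s1 t1 by (auto simp: d_def)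
    ultimately have "multiplicity p s1 + k \<le> multiplicity p d"
      using p by (intro multiplicity_geI) (auto simp: not_prime_unit)
    also have "multiplicity p d = multiplicity p (gcd d s1) + multiplicity p (d div gcd d s1)"
      using \<open>d \<noteq> 0\<close> p by (metis dvd_mult_div_cancel gcd_dvd1 mult_eq_0_iff
          prime_elem_multiplicity_mult_distrib prime_imp_prime_elem)
    also have "multiplicity p (gcd d s1) \<le> multiplicity p s1"
      using dvd_imp_multiplicity_le[of "gcd d s1" s1] \<open>s1 > 0\<close> by simp
    finally show ?thesis by simp
  qed
  then show "multiplicity p e \<le> multiplicity p (d div gcd d s1)"
    by (cases "k = 0") (simp_all add: k_def)
qed

section \<open>Sorting by residue classes\<close>

text \<open>The block index \<open>b \<in> {1..d}\<close> of the statement that belongs to the residue of \<open>v\<close>.\<close>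

definition residue_rep :: "nat \<Rightarrow> nat \<Rightarrow> nat" where
  "residue_rep d v = (if v mod d = 0 then d else v mod d)"

text \<open>The position of \<open>v\<close> when \<open>{1..n}\<close> is listed block by block, increasingly within each
  block; its inverse is the permutation of the statement.\<close>

definition class_rank :: "nat \<Rightarrow> nat \<Rightarrow> nat \<Rightarrow> nat" where
  "class_rank n d v = card {u\<in>{1..n}. residue_rep d u < residue_rep d v}
     + card {u\<in>{1..n}. residue_rep d u = residue_rep d v \<and> u \<le> v}"

context
  fixes n d :: nat
  assumes d_pos: "d > 0"
begin

lemma residue_rep_bounds: "residue_rep d v \<in> {1..d}"
  using d_pos by (auto simp: residue_rep_def less_imp_le)

lemma residue_rep_eq_iff: "residue_rep d u = residue_rep d v \<longleftrightarrow> u mod d = v mod d"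
proof -
  have "u mod d \<noteq> d" "v mod d \<noteq> d" using d_pos by (metis less_irrefl mod_less_divisor)+
  then show ?thesis by (auto simp: residue_rep_def)
qed

lemma mod_eq_iff_residue_rep: "c \<in> {1..d} \<Longrightarrow> v mod d = c mod d \<longleftrightarrow> residue_rep d v = c"
  using mod_less_divisor[OF d_pos, of v] by (cases "c = d") (auto simp: residue_rep_def)

lemma sum_class_sizes:
  "b \<le> d \<Longrightarrow> (\<Sum>c=1..b. card {v\<in>{1..n}. v mod d = c mod d}) = card {u\<in>{1..n}. residue_rep d u \<le> b}"
proof (induction b)
  case 0
  have "residue_rep d u \<noteq> 0" for u using residue_rep_bounds[of u] by auto
  then show ?case by simp
next
  case (Suc b)
  let ?C = "{v\<in>{1..n}. v mod d = Suc b mod d}"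
  have C: "?C = {u\<in>{1..n}. residue_rep d u = Suc b}"
    using Suc.prems by (intro Collect_cong conj_cong refl mod_eq_iff_residue_rep) auto
  have "{u\<in>{1..n}. residue_rep d u \<le> Suc b} = {u\<in>{1..n}. residue_rep d u \<le> b} \<union> ?C"
    unfolding C by auto
  moreover have "{u\<in>{1..n}. residue_rep d u \<le> b} \<inter> ?C = {}"
    unfolding C by auto
  ultimately have "card {u\<in>{1..n}. residue_rep d u \<le> Suc b} = card {u\<in>{1..n}. residue_rep d u \<le> b} + card ?C"
    by (simp add: card_Un_disjoint)
  with Suc show ?case by simp
qed

lemma class_rank_bounds:
  assumes "v \<in> {1..n}"
  shows "card {u\<in>{1..n}. residue_rep d u < residue_rep d v} < class_rank n d v"
    and "class_rank n d v \<le> card {u\<in>{1..n}. residue_rep d u \<le> residue_rep d v}"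
proof -
  have "v \<in> {u\<in>{1..n}. residue_rep d u = residue_rep d v \<and> u \<le> v}" using assms by simp
  then show "card {u\<in>{1..n}. residue_rep d u < residue_rep d v} < class_rank n d v"
    by (auto simp: class_rank_def card_gt_0_iff)
  have "class_rank n d v = card ({u\<in>{1..n}. residue_rep d u < residue_rep d v}
      \<union> {u\<in>{1..n}. residue_rep d u = residue_rep d v \<and> u \<le> v})"
    by (subst card_Un_disjoint) (auto simp: class_rank_def)
  also have "\<dots> \<le> card {u\<in>{1..n}. residue_rep d u \<le> residue_rep d v}"
    by (rule card_mono) auto
  finally show "class_rank n d v \<le> card {u\<in>{1..n}. residue_rep d u \<le> residue_rep d v}" .
qed

lemma block_of_class_rank:
  assumes v: "v \<in> {1..n}"
  shows "block_of (\<lambda>c. card {v\<in>{1..n}. v mod d = c mod d}) (class_rank n d v) = residue_rep d v"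
  unfolding block_of_def
proof (rule Least_equality)
  show "class_rank n d v \<le> (\<Sum>c=1..residue_rep d v. card {v\<in>{1..n}. v mod d = c mod d})"
    using class_rank_bounds(2)[OF v] sum_class_sizes residue_rep_bounds by simp
  fix b assume b: "class_rank n d v \<le> (\<Sum>c=1..b. card {v\<in>{1..n}. v mod d = c mod d})"
  show "residue_rep d v \<le> b"
  proof (rule ccontr)
    assume "\<not> residue_rep d v \<le> b"
    then have "b < residue_rep d v" "b \<le> d" using residue_rep_bounds[of v] by auto
    then have "(\<Sum>c=1..b. card {v\<in>{1..n}. v mod d = c mod d})
        \<le> card {u\<in>{1..n}. residue_rep d u < residue_rep d v}"
      unfolding sum_class_sizes[OF \<open>b \<le> d\<close>] by (intro card_mono) auto
    with b class_rank_bounds(1)[OF v] show False by simp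
  qed
qed

lemma inj_on_class_rank: "inj_on (class_rank n d) {1..n}"
proof -
  have less: "class_rank n d u < class_rank n d v"
    if "u \<in> {1..n}" "v \<in> {1..n}"
      and "residue_rep d u < residue_rep d v \<or> residue_rep d u = residue_rep d v \<and> u < v" for u v
  proof (cases "residue_rep d u < residue_rep d v")
    case True
    have "class_rank n d u \<le> card {w\<in>{1..n}. residue_rep d w \<le> residue_rep d u}"
      by (rule class_rank_bounds(2)[OF that(1)])
    also have "\<dots> \<le> card {w\<in>{1..n}. residue_rep d w < residue_rep d v}"
      using True by (intro card_mono) auto
    also have "\<dots> < class_rank n d v" by (rule class_rank_bounds(1)[OF that(2)])
    finally show ?thesis .
  next
    case False
    then have same: "residue_rep d u = residue_rep d v" "u < v" using that(3) by auto
    let ?E = "\<lambda>x. {w\<in>{1..n}. residue_rep d w = residue_rep d v \<and> w \<le> x}"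
    have "?E u \<subseteq> ?E v" and "v \<in> ?E v - ?E u" using same that(2) by auto
    then have "card (?E u) < card (?E v)" by (intro psubset_card_mono) auto
    then show ?thesis using same(1) by (simp add: class_rank_def)
  qed
  show ?thesis
  proof (rule inj_onI, rule ccontr)
    fix u v assume uv: "u \<in> {1..n}" "v \<in> {1..n}" "class_rank n d u = class_rank n d v" "u \<noteq> v"
    then have "residue_rep d u < residue_rep d v \<or> residue_rep d u = residue_rep d v \<and> u < v
        \<or> residue_rep d v < residue_rep d u \<or> residue_rep d v = residue_rep d u \<and> v < u"
      by linarith
    then show False using less[OF uv(1,2)] less[OF uv(2,1)] uv(3) by fastforce
  qed
qed

lemma class_rank_image: "class_rank n d ` {1..n} = {1..n}"
proof (rule endo_inj_surj)
  show "class_rank n d ` {1..n} \<subseteq> {1..n}"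
  proof (rule image_subsetI)
    fix v assume v: "v \<in> {1..n}"
    have "card {u\<in>{1..n}. residue_rep d u \<le> residue_rep d v} \<le> card {1..n}"
      by (rule card_mono) auto
    then show "class_rank n d v \<in> {1..n}" using class_rank_bounds[OF v] by simp
  qed
  show "inj_on (class_rank n d) {1..n}" by (rule inj_on_class_rank)
qed simp

lemma exists_perm_residues_to_blocks:
  "\<exists>\<sigma>. bij_betw \<sigma> {1..n} {1..n} \<and> (\<forall>i\<in>{1..n}. \<forall>j\<in>{1..n}.
     \<sigma> i mod d = \<sigma> j mod d \<longleftrightarrow>
     block_of (\<lambda>c. card {v\<in>{1..n}. v mod d = c mod d}) i
       = block_of (\<lambda>c. card {v\<in>{1..n}. v mod d = c mod d}) j)"
proof (intro exI conjI ballI)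
  have bij: "bij_betw (class_rank n d) {1..n} {1..n}"
    using inj_on_class_rank class_rank_image by (simp add: bij_betw_def)
  then show bij_inv: "bij_betw (inv_into {1..n} (class_rank n d)) {1..n} {1..n}"
    by (rule bij_betw_inv_into)
  have block: "block_of (\<lambda>c. card {v\<in>{1..n}. v mod d = c mod d}) i
      = residue_rep d (inv_into {1..n} (class_rank n d) i)" if "i \<in> {1..n}" for i
  proof -
    have "class_rank n d (inv_into {1..n} (class_rank n d) i) = i"
      using that class_rank_image by (metis f_inv_into_f)
    then show ?thesis using block_of_class_rank[OF bij_betw_apply[OF bij_inv that]] by simp
  qed
  fix i j assume "i \<in> {1..n}" "j \<in> {1..n}"
  show "inv_into {1..n} (class_rank n d) i mod d = inv_into {1..n} (class_rank n d) j mod d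
      \<longleftrightarrow> block_of (\<lambda>c. card {v\<in>{1..n}. v mod d = c mod d}) i
        = block_of (\<lambda>c. card {v\<in>{1..n}. v mod d = c mod d}) j"
    unfolding block[OF \<open>i \<in> {1..n}\<close>] block[OF \<open>j \<in> {1..n}\<close>] residue_rep_eq_iff ..
qed

end

section \<open>Walks in a Boolean Toeplitz digraph\<close>

locale boolean_toeplitz =
  fixes n :: nat and S T :: "nat set"
  assumes n_ge_2: "n \<ge> 2"
    and S_nonempty: "S \<noteq> {}" and S_subset: "S \<subseteq> {1..n-1}"
    and T_nonempty: "T \<noteq> {}" and T_subset: "T \<subseteq> {1..n-1}"
    and Max_S_add_Min_T: "Max S + Min T \<le> n" and Min_S_add_Max_T: "Min S + Max T \<le> n"
begin

abbreviation "A \<equiv> toeplitz n S T"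
abbreviation "s1 \<equiv> Min S"
abbreviation "t1 \<equiv> Min T"
abbreviation "reaches p q \<equiv> \<exists>m. bpow n A m p q"

definition d :: nat where "d = Gcd {s + t | s t. s \<in> S \<and> t \<in> T}"

abbreviation "period \<equiv> d div gcd d s1"

lemma finite_S: "finite S" and finite_T: "finite T"
  using S_subset T_subset finite_subset by blast+

lemma Min_S_in: "s1 \<in> S" and Min_T_in: "t1 \<in> T"
  using finite_S finite_T S_nonempty T_nonempty by simp_all

lemma S_pos: "x \<in> S \<Longrightarrow> x > 0" and T_pos: "y \<in> T \<Longrightarrow> y > 0"
  using S_subset T_subset by fastforce+

lemma add_Min_T_le: "x \<in> S \<Longrightarrow> x + t1 \<le> n"
  using Max_ge[OF finite_S, of x] Max_S_add_Min_T by simp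

lemma Min_S_add_le: "y \<in> T \<Longrightarrow> s1 + y \<le> n"
  using Max_ge[OF finite_T, of y] Min_S_add_Max_T by simp

lemma d_dvd_add: "x \<in> S \<Longrightarrow> y \<in> T \<Longrightarrow> d dvd x + y"
  unfolding d_def by (rule Gcd_dvd) blast

lemma d_pos: "d > 0"
  using d_dvd_add[OF Min_S_in Min_T_in] S_pos[OF Min_S_in] by (auto intro: gr0I)

lemma d_le_n: "d \<le> n"
  using dvd_imp_le[OF d_dvd_add[OF Min_S_in Min_T_in]] S_pos[OF Min_S_in] Min_S_add_le[OF Min_T_in]
  by simp

lemma period_pos: "period > 0"
  using d_pos by (simp add: div_greater_zero_iff)

lemma period_dvd_iff: "period dvd c \<longleftrightarrow> int d dvd int c * int s1"
  using dvd_mult_iff_div_gcd_dvd[OF d_pos, of c s1] by (metis of_nat_dvd_iff of_nat_mult)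

\<comment> \<open>Each step \<open>+s\<close> or \<open>-t\<close> moves by \<open>s1\<close> modulo \<open>d\<close>, as \<open>s \<equiv> s1\<close> and \<open>-t \<equiv> s1\<close>.\<close>
lemma walk_congruence: "bpow n A m i k \<Longrightarrow> int d dvd int k - int i - int m * int s1"
proof (induction m arbitrary: k)
  case 0
  then show ?case by (simp add: bid_def)
next
  case (Suc m)
  then obtain l where l: "bpow n A m i l" "A l k" by (auto simp: bmult_def)
  have "int d dvd int k - int l - int s1"
  proof -
    have dvd_int: "int d dvd int x + int y" if "x \<in> S" "y \<in> T" for x y
      using d_dvd_add[OF that] by (metis of_nat_add of_nat_dvd_iff)
    from l(2) consider x where "x \<in> S" "int k - int l = int x" | y where "y \<in> T" "int l - int k = int y"
      by (auto simp: toeplitz_def)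
    then show ?thesis
    proof cases
      case 1
      then have "int k - int l - int s1 = (int x + int t1) - (int s1 + int t1)" by simp
      then show ?thesis using dvd_diff[OF dvd_int[OF 1(1) Min_T_in] dvd_int[OF Min_S_in Min_T_in]]
        by simp
    next
      case 2
      then have "int k - int l - int s1 = - (int s1 + int y)" by simp
      then show ?thesis using dvd_int[OF Min_S_in 2(1)] by (simp only: dvd_minus_iff)
    qed
  qed
  moreover have "int k - int i - int (Suc m) * int s1
      = (int l - int i - int m * int s1) + (int k - int l - int s1)"
    by (simp add: algebra_simps)
  ultimately show ?case using dvd_add[OF Suc.IH[OF l(1)]] by (simp only:)
qed

lemma step_up: "x \<in> S \<Longrightarrow> 1 \<le> p \<Longrightarrow> p + x \<le> n \<Longrightarrow> bpow n A 1 p (p + x)"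
  using S_pos unfolding bpow_one by (auto simp: toeplitz_def)

lemma step_down: "y \<in> T \<Longrightarrow> y < p \<Longrightarrow> p \<le> n \<Longrightarrow> bpow n A 1 p (p - y)"
  using T_pos unfolding bpow_one by (auto simp: toeplitz_def)

lemma closed_walk_cycle_length:
  assumes x: "x \<in> S" and y: "y \<in> T" and xy: "x + y \<le> n" and v: "v \<in> {1..n}"
  shows "bpow n A (cycle_length x y) v v"
proof -
  define G where "G = gcd x y"
  have "y div G * x = x div G * y" by (metis G_def dvd_div_mult gcd_dvd1 gcd_dvd2 mult.commute)
  then have balanced: "int (y div G) * int x = int (x div G) * int y" by (metis of_nat_mult)
  have "bpow n A ((y div G) * 1 + (x div G) * 1) v
      (nat (int v + int (y div G) * int x - int (x div G) * int y))"
    by (rule greedy_walk[where W = "bpow n A"])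
      (use bpow_add step_up[OF x] step_down[OF y] xy v balanced in \<open>auto simp: bid_def\<close>)
  then show ?thesis using balanced v by (simp add: cycle_length_def G_def add.commute)
qed

definition short_cycle_lengths :: "nat set" where
  "short_cycle_lengths = cycle_length s1 ` T \<union> (\<lambda>x. cycle_length x t1) ` S"

lemma Gcd_short_cycle_lengths_dvd_period: "Gcd short_cycle_lengths dvd period"
  unfolding d_def
proof (rule dvd_Gcd_sums_div_gcd[OF Min_S_in Min_T_in])
  show "0 \<notin> S" "0 \<notin> T" using S_pos T_pos by blast+
  have "cycle_length s1 t1 \<in> short_cycle_lengths" using Min_T_in by (simp add: short_cycle_lengths_def)
  then show "Gcd short_cycle_lengths > 0"
    using cycle_length_pos[OF S_pos[OF Min_S_in]] by (metis Gcd_dvd dvd_0_left_iff gr0I)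
qed (auto simp: short_cycle_lengths_def)

lemma eventually_closed_walks: "\<exists>C. \<forall>v\<in>{1..n}. \<forall>c\<ge>C. period dvd c \<longrightarrow> bpow n A c v v"
proof -
  obtain C where C: "\<forall>X. add_submonoid X \<longrightarrow> short_cycle_lengths \<subseteq> X \<longrightarrow>
      (\<forall>c\<ge>C. Gcd short_cycle_lengths dvd c \<longrightarrow> c \<in> X)"
    using large_Gcd_multiples_in_add_submonoid[of short_cycle_lengths] finite_S finite_T
    by (auto simp: short_cycle_lengths_def)
  have "bpow n A c v v" if v: "v \<in> {1..n}" and c: "c \<ge> C" "period dvd c" for v c
  proof -
    have "add_submonoid {c. bpow n A c v v}"
      using v bpow_add by (auto simp: add_submonoid_def bid_def)
    moreover have "short_cycle_lengths \<subseteq> {c. bpow n A c v v}"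
      using closed_walk_cycle_length[OF Min_S_in _ Min_S_add_le v]
        closed_walk_cycle_length[OF _ Min_T_in add_Min_T_le v]
      by (auto simp: short_cycle_lengths_def)
    moreover have "Gcd short_cycle_lengths dvd c"
      using Gcd_short_cycle_lengths_dvd_period c(2) by (rule dvd_trans)
    ultimately show ?thesis using C c(1) by blast
  qed
  then show ?thesis by blast
qed

definition up_reachable :: "nat \<Rightarrow> bool" where
  "up_reachable c \<longleftrightarrow> (\<forall>p. 1 \<le> p \<longrightarrow> p + c \<le> n \<longrightarrow> reaches p (p + c))"

definition down_reachable :: "nat \<Rightarrow> bool" where
  "down_reachable c \<longleftrightarrow> (\<forall>p. c < p \<longrightarrow> p \<le> n \<longrightarrow> reaches p (p - c))"

lemma up_reachable_S: "x \<in> S \<Longrightarrow> up_reachable x"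
  unfolding up_reachable_def using step_up by blast

lemma down_reachable_T: "y \<in> T \<Longrightarrow> down_reachable y"
  unfolding down_reachable_def using step_down by blast

lemma reaches_greedy:
  assumes "up_reachable a" "down_reachable b" "a + b \<le> n" "p \<in> {1..n}"
    and "int p + int u * int a - int w * int b \<in> {1..int n}"
  shows "reaches p (nat (int p + int u * int a - int w * int b))"
proof -
  have "(\<lambda>_ p q. reaches p q) (u * 0 + w * 0) p (nat (int p + int u * int a - int w * int b))"
  proof (rule greedy_walk[where n = n and x = a and y = b])
    show "reaches p p" if "p \<in> {1..n}" for p using that by (intro exI[of _ 0]) (simp add: bid_def)
    show "reaches p r" if "reaches p q" "reaches q r" for p q r using that bpow_add by blast
  qed (use assms in \<open>auto simp: up_reachable_def down_reachable_def\<close>)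
  then show ?thesis by simp
qed

lemma up_down_reachable_gcd:
  assumes up: "up_reachable a" and down: "down_reachable b" and ab: "a + b \<le> n"
    and "a > 0" "b > 0"
  shows "up_reachable (gcd a b)" and "down_reachable (gcd a b)"
proof -
  obtain u w where "a * u = b * w + gcd a b" using bezout_nat[of a b] \<open>a > 0\<close> by auto
  then have uw: "int u * int a - int w * int b = int (gcd a b)"
    by (metis add_diff_cancel_left' mult.commute of_nat_add of_nat_mult)
  show "up_reachable (gcd a b)" unfolding up_reachable_def
  proof (intro allI impI)
    fix p assume "1 \<le> p" "p + gcd a b \<le> n"
    moreover have "int p + int u * int a - int w * int b = int (p + gcd a b)"
      using uw unfolding of_nat_add by linarith
    ultimately show "reaches p (p + gcd a b)"
      using reaches_greedy[OF up down ab, of p u w] by (simp del: of_nat_add)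
  qed
  obtain u' w' where "b * w' = a * u' + gcd a b"
    using bezout_nat[of b a] \<open>b > 0\<close> by (auto simp: gcd.commute)
  then have uw': "int u' * int a - int w' * int b = - int (gcd a b)"
    by (metis add_diff_cancel_left' minus_diff_eq mult.commute of_nat_add of_nat_mult)
  show "down_reachable (gcd a b)" unfolding down_reachable_def
  proof (intro allI impI)
    fix p assume "gcd a b < p" "p \<le> n"
    moreover from this have "int p + int u' * int a - int w' * int b = int (p - gcd a b)"
      using uw' unfolding of_nat_diff[OF less_imp_le[OF \<open>gcd a b < p\<close>]] by linarith
    moreover have "p - gcd a b \<in> {1..n}" using \<open>gcd a b < p\<close> \<open>p \<le> n\<close> by auto
    ultimately show "reaches p (p - gcd a b)"
      using reaches_greedy[OF up down ab, of p u' w'] by (simp del: of_nat_diff)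
  qed
qed

definition common_steps :: "nat set" where
  "common_steps = {c. c > 0 \<and> up_reachable c \<and> down_reachable c}"

definition least_step :: nat where
  "least_step = (LEAST c. c \<in> common_steps)"

lemma gcd_mem_common_steps: "x \<in> S \<Longrightarrow> y \<in> T \<Longrightarrow> x + y \<le> n \<Longrightarrow> gcd x y \<in> common_steps"
  using up_down_reachable_gcd[OF up_reachable_S down_reachable_T] S_pos T_pos
  by (simp add: common_steps_def)

lemma least_step_mem: "least_step \<in> common_steps"
  unfolding least_step_def
  by (rule LeastI) (rule gcd_mem_common_steps[OF Min_S_in Min_T_in Min_S_add_le[OF Min_T_in]])

lemma least_step_le: "least_step \<le> s1" "least_step \<le> t1"
proof -
  have "least_step \<le> gcd s1 t1"
    unfolding least_step_def
    by (rule Least_le) (rule gcd_mem_common_steps[OF Min_S_in Min_T_in Min_S_add_le[OF Min_T_in]])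
  then show "least_step \<le> s1" "least_step \<le> t1"
    using S_pos[OF Min_S_in] T_pos[OF Min_T_in]
    by (auto intro: order_trans[OF _ gcd_le1_nat] order_trans[OF _ gcd_le2_nat])
qed

lemma least_step_dvd: "c \<in> common_steps \<Longrightarrow> least_step + c \<le> n \<Longrightarrow> least_step dvd c"
proof -
  assume c: "c \<in> common_steps" "least_step + c \<le> n"
  then have "gcd least_step c \<in> common_steps"
    using up_down_reachable_gcd[of least_step c] least_step_mem by (auto simp: common_steps_def)
  then have "least_step \<le> gcd least_step c" unfolding least_step_def by (rule Least_le)
  moreover have "gcd least_step c \<le> least_step"
    using least_step_mem by (simp add: common_steps_def)
  ultimately show ?thesis by (metis gcd_dvd2 le_antisym)
qed

lemma least_step_dvd_S: "x \<in> S \<Longrightarrow> least_step dvd x"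
proof -
  assume x: "x \<in> S"
  have "gcd x t1 \<le> t1" using T_pos[OF Min_T_in] by simp
  then have "least_step + gcd x t1 \<le> n" using least_step_le Min_S_add_le[OF Min_T_in] by linarith
  then have "least_step dvd gcd x t1"
    by (rule least_step_dvd[OF gcd_mem_common_steps[OF x Min_T_in add_Min_T_le[OF x]]])
  then show ?thesis using dvd_trans gcd_dvd1 by blast
qed

lemma least_step_dvd_T: "y \<in> T \<Longrightarrow> least_step dvd y"
proof -
  assume y: "y \<in> T"
  have "gcd s1 y \<le> s1" using S_pos[OF Min_S_in] by simp
  then have "least_step + gcd s1 y \<le> n" using least_step_le Min_S_add_le[OF Min_T_in] by linarith
  then have "least_step dvd gcd s1 y"
    by (rule least_step_dvd[OF gcd_mem_common_steps[OF Min_S_in y Min_S_add_le[OF y]]])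
  then show ?thesis using dvd_trans gcd_dvd2 by blast
qed

lemma least_step_dvd_gcd: "least_step dvd gcd d s1"
proof -
  have "least_step dvd d"
    unfolding d_def by (rule Gcd_greatest) (auto intro: dvd_add least_step_dvd_S least_step_dvd_T)
  then show ?thesis using least_step_dvd_S[OF Min_S_in] by simp
qed

lemma reaches_if_congruent:
  assumes i: "i \<in> {1..n}" and k: "k \<in> {1..n}" and "int (gcd d s1) dvd int k - int i"
  shows "reaches i k"
proof -
  let ?\<gamma> = least_step
  have "int ?\<gamma> dvd int k - int i"
    using least_step_dvd_gcd assms(3) by (meson dvd_trans of_nat_dvd_iff)
  then obtain q where q: "int k - int i = int ?\<gamma> * q" by (rule dvdE)
  have "int i + int (nat q) * int ?\<gamma> - int (nat (- q)) * int ?\<gamma> = int k"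
    using q by (cases "q \<ge> 0") (simp_all add: algebra_simps)
  moreover have "?\<gamma> + ?\<gamma> \<le> n" using least_step_le Min_S_add_le[OF Min_T_in] by linarith
  ultimately show ?thesis
    using reaches_greedy[of ?\<gamma> ?\<gamma> i "nat q" "nat (- q)"] least_step_mem i k
    by (simp add: common_steps_def)
qed

lemma eventually_walks_if_congruent:
  "\<exists>M. \<forall>m\<ge>M. \<forall>i\<in>{1..n}. \<forall>k\<in>{1..n}.
     int d dvd int k - int i - int m * int s1 \<longrightarrow> bpow n A m i k"
proof -
  obtain B where B: "\<And>i k. reaches i k \<Longrightarrow> \<exists>a\<le>B. bpow n A a i k"
    using bounded_walk_lengths by blast
  obtain C where C: "\<And>v c. v \<in> {1..n} \<Longrightarrow> c \<ge> C \<Longrightarrow> period dvd c \<Longrightarrow> bpow n A c v v"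
    using eventually_closed_walks by blast
  have "bpow n A m i k"
    if m: "m \<ge> B + C" and i: "i \<in> {1..n}" and k: "k \<in> {1..n}"
      and congr: "int d dvd int k - int i - int m * int s1" for m i k
  proof -
    \<comment> \<open>A walk from \<open>i\<close> to \<open>k\<close> of length at most \<open>B\<close>, preceded by a closed walk at \<open>i\<close>
      that fills up the length.\<close>
    have "int (gcd d s1) dvd (int k - int i - int m * int s1) + int m * int s1"
      using congr by (intro dvd_add) (auto intro: dvd_trans[of _ "int d"])
    then have "reaches i k" using reaches_if_congruent[OF i k] by simp
    then obtain a where a: "a \<le> B" "bpow n A a i k" using B by blast
    have "int d dvd (int k - int i - int a * int s1) - (int k - int i - int m * int s1)"
      using walk_congruence[OF a(2)] congr by (rule dvd_diff)
    then have "period dvd m - a" using a(1) m by (simp add: period_dvd_iff algebra_simps)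
    then have "bpow n A (m - a) i i" using C[OF i] a(1) m by simp
    from bpow_add[OF this a(2)] show ?thesis using a(1) m by simp
  qed
  then show ?thesis by blast
qed

lemma eventually_bpow_iff:
  "\<exists>M. \<forall>m\<ge>M. \<forall>i k. bpow n A m i k \<longleftrightarrow>
     i \<in> {1..n} \<and> k \<in> {1..n} \<and> int d dvd int k - int i - int m * int s1"
  using eventually_walks_if_congruent bpow_in_range walk_congruence by meson

lemma exists_congruent_vertex: "\<exists>k\<in>{1..n}. int d dvd int k - z"
proof
  define k where "k = nat ((z - 1) mod int d) + 1"
  have "(z - 1) mod int d \<ge> 0" "(z - 1) mod int d < int d" using d_pos by simp_all
  then show "k \<in> {1..n}" using d_le_n by (auto simp: k_def)
  have "int k - z = - (int d * ((z - 1) div int d))"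
    using \<open>(z - 1) mod int d \<ge> 0\<close> div_mult_mod_eq[of "z - 1" "int d"]
    by (simp add: k_def algebra_simps)
  then show "int d dvd int k - z" by simp
qed

lemma eventually_bpow_shift_iff: "\<exists>M. \<forall>m\<ge>M. \<forall>q. bpow n A (m + q) = bpow n A m \<longleftrightarrow> period dvd q"
proof -
  obtain M where M: "\<And>m i k. m \<ge> M \<Longrightarrow> bpow n A m i k \<longleftrightarrow>
      i \<in> {1..n} \<and> k \<in> {1..n} \<and> int d dvd int k - int i - int m * int s1"
    using eventually_bpow_iff by blast
  have "bpow n A (m + q) = bpow n A m \<longleftrightarrow> int d dvd int q * int s1" if "m \<ge> M" for m q
  proof
    assume eq: "bpow n A (m + q) = bpow n A m"
    obtain k where k: "k \<in> {1..n}" "int d dvd int k - int 1 - int m * int s1"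
      using exists_congruent_vertex by (metis diff_diff_eq)
    then have "bpow n A m 1 k" using M[OF that] n_ge_2 by simp
    then have "int d dvd int k - int 1 - int (m + q) * int s1" using eq M[of "m + q"] that by simp
    from dvd_diff[OF k(2) this] show "int d dvd int q * int s1" by (simp add: algebra_simps)
  next
    assume "int d dvd int q * int s1"
    then have "int d dvd int k - int i - int m * int s1 \<longleftrightarrow>
        int d dvd int k - int i - int (m + q) * int s1" for i k
      using dvd_add_left_iff[of "int d" "int q * int s1" "int k - int i - int (m + q) * int s1"]
      by (simp add: algebra_simps)
    then show "bpow n A (m + q) = bpow n A m" using M that by (auto simp: fun_eq_iff)
  qed
  then show ?thesis by (auto simp: period_dvd_iff)
qed

lemma eventually_compm_iff:
  "\<exists>M. \<forall>m\<ge>M. \<forall>i j. compm n A m i j \<longleftrightarrow> i \<in> {1..n} \<and> j \<in> {1..n} \<and> int d dvd int i - int j"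
proof -
  obtain M where M: "\<And>m i k. m \<ge> M \<Longrightarrow> bpow n A m i k \<longleftrightarrow>
      i \<in> {1..n} \<and> k \<in> {1..n} \<and> int d dvd int k - int i - int m * int s1"
    using eventually_bpow_iff by blast
  have "compm n A m i j \<longleftrightarrow> i \<in> {1..n} \<and> j \<in> {1..n} \<and> int d dvd int i - int j"
    if "m \<ge> M" for m i j
  proof -
    have "(\<exists>k\<in>{1..n}. int d dvd int k - int i - int m * int s1 \<and> int d dvd int k - int j - int m * int s1)
        \<longleftrightarrow> int d dvd int i - int j"
    proof
      assume "\<exists>k\<in>{1..n}. int d dvd int k - int i - int m * int s1 \<and> int d dvd int k - int j - int m * int s1"
      then obtain k where "int d dvd int k - int i - int m * int s1" "int d dvd int k - int j - int m * int s1"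
        by blast
      from dvd_diff[OF this(2,1)] show "int d dvd int i - int j" by simp
    next
      assume ij: "int d dvd int i - int j"
      obtain k where k: "k \<in> {1..n}" "int d dvd int k - (int i + int m * int s1)"
        using exists_congruent_vertex by blast
      have "int d dvd int k - int j - int m * int s1"
        using dvd_add[OF k(2) ij] by (simp add: algebra_simps)
      with k show "\<exists>k\<in>{1..n}. int d dvd int k - int i - int m * int s1 \<and> int d dvd int k - int j - int m * int s1"
        by (auto simp: algebra_simps)
    qed
    then show ?thesis using M[OF that] by (auto simp: compm_iff)
  qed
  then show ?thesis by blast
qed

end

theorem corollary2p4:
  fixes n :: nat and S T :: "nat set"
  assumes "n \<ge> 2"
    and "S \<noteq> {}" "S \<subseteq> {1..n-1}" "T \<noteq> {}" "T \<subseteq> {1..n-1}"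
    and "Max S + Min T \<le> n" "Min S + Max T \<le> n"
  defines "A \<equiv> toeplitz n S T"
    and "d \<equiv> Gcd {s + t | s t. s \<in> S \<and> t \<in> T}"
  defines "d' \<equiv> gcd d (Min S)"
  shows "is_matrix_period n A (d div d') \<and>
         is_competition_period n A 1 \<and>
         (\<exists>\<sigma>. bij_betw \<sigma> {1..n} {1..n} \<and>
           (\<exists>M. \<forall>m\<ge>M. \<forall>i\<in>{1..n}. \<forall>j\<in>{1..n}.
              compm n A m (\<sigma> i) (\<sigma> j) =
              blockdiag_ones n (\<lambda>b. card {v\<in>{1..n}. v mod d = b mod d}) i j))"
proof -
  interpret tz: boolean_toeplitz n S T using assms(1-7) by unfold_locales
  have d: "d = tz.d" unfolding d_def tz.d_def ..
  obtain M1 where "\<And>m q. m \<ge> M1 \<Longrightarrow> bpow n A (m + q) = bpow n A m \<longleftrightarrow> d div d' dvd q"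
    using tz.eventually_bpow_shift_iff unfolding A_def d'_def d by blast
  then have "is_matrix_period n A (d div d')"
    using tz.period_pos by (intro is_matrix_periodI) (auto simp: d d'_def)
  moreover obtain M where M: "\<And>m i j. m \<ge> M \<Longrightarrow>
      compm n A m i j \<longleftrightarrow> i \<in> {1..n} \<and> j \<in> {1..n} \<and> int d dvd int i - int j"
    using tz.eventually_compm_iff unfolding A_def d by blast
  then have "is_competition_period n A 1"
    by (intro is_competition_period_oneI[where M = M and
          C = "\<lambda>i j. i \<in> {1..n} \<and> j \<in> {1..n} \<and> int d dvd int i - int j"])
      (simp add: fun_eq_iff)
  moreover obtain \<sigma> where \<sigma>: "bij_betw \<sigma> {1..n} {1..n}" "\<And>i j. i \<in> {1..n} \<Longrightarrow> j \<in> {1..n} \<Longrightarrow>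
      \<sigma> i mod d = \<sigma> j mod d \<longleftrightarrow> block_of (\<lambda>b. card {v\<in>{1..n}. v mod d = b mod d}) i
        = block_of (\<lambda>b. card {v\<in>{1..n}. v mod d = b mod d}) j"
    using exists_perm_residues_to_blocks[OF tz.d_pos, of n] unfolding d[symmetric] by blast
  then have "compm n A m (\<sigma> i) (\<sigma> j) = blockdiag_ones n (\<lambda>b. card {v\<in>{1..n}. v mod d = b mod d}) i j"
    if "m \<ge> M" "i \<in> {1..n}" "j \<in> {1..n}" for m i j
    using M[OF that(1)] bij_betw_apply[OF \<sigma>(1)] that(2,3)
    by (simp add: blockdiag_ones_def mod_eq_iff_int_dvd)
  ultimately show ?thesis using \<sigma>(1) by blast
qed

end
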